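(* For any number of features $D$, given $\pi_1=\epsilon$ small, the two positive regions $\mathbb R^D_{++}$ and $-\mathbb R^D_{++}$ are stable for EM. That is, $M(\boldsymbol\lambda)\succ\boldsymbol\lambda$ for all feasible $\boldsymbol\lambda\succ0$, and $M(\boldsymbol\lambda)\prec\boldsymbol\lambda$ for all feasible $\boldsymbol\lambda\prec0$.
   Context: Setting: a mixture of two Bernoullis on $\{0,1\}^D$. - The true distribution is $p^*=\pi_1^*B(\cdot\mid\boldsymbol\mu_1^* )+\pi_2^*B(\cdot\mid\boldsymbol\mu_2^* )$, where $B(\mathbf x\mid\boldsymbol\mu)=\prod_i\mu_i^{x_i}(1-\mu_i)^{1-x_i}$ and $\pi_1^*\in(0,1)$. - It is fitted by population EM to the model $\pi_1B(\cdot\mid\boldsymbol\mu_1)+\pi_2B(\cdot\mid\boldsymbol\mu_2)$. Notation: - $\overline{\mathbf x}=\mathbb E_{p^*}[\mathbf x]$, $S_i=\overline x_i(1-\overline x_i)$ and $\boldsymbol\mu^*=(\boldsymbol\mu_1^*-\boldsymbol\mu_2^* )/2$. - Take $\boldsymbol\mu_2=\overline{\mathbf x}$, set $\mathbf b=\boldsymbol\mu_1-\overline{\mathbf x}$ and $\lambda_i=2S_i^{-1}\mu_i^*b_i$. - The feasible domain is $\{\boldsymbol\lambda(\boldsymbol\mu_1):\boldsymbol\mu_1\in[0,1]^D\}$. - $Z_1(\boldsymbol\lambda)=\pi_1^*\prod_i(1+\pi_2^*\lambda_i)+\pi_2^*\prod_i(1-\pi_1^*\lambda_i)$. - $B_{1i}=\prod_{j\ne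 i}(1+\pi_2^*\lambda_j)$, $B_{2i}=\prod_{j\ne i}(1-\pi_1^*\lambda_j)$, and $\Lambda_i=\mu_{1i}(1-\mu_{1i})$. EM update: - In the one-cluster regime ($\pi_1$ small), the population EM update of $\boldsymbol\mu_1$ is, to leading order, the mean of the normalized distribution proportional to $p^*(\mathbf x)B(\mathbf x\mid\boldsymbol\mu_1)/B(\mathbf x\mid\overline{\mathbf x})$. - $M(\boldsymbol\lambda)$ denotes the image of this updated $\boldsymbol\mu_1$ under the affine map $\boldsymbol\mu_1\mapsto\boldsymbol\lambda$. Explicitly, $$M(\boldsymbol\lambda)_i=\lambda_i+(2S_i^{-1}\mu_i^* )^2\pi_1^*\pi_2^*\frac{\Lambda_i}{Z_1(\boldsymbol\lambda)}(B_{1i}-B_{2i}).$$ $\succ$ and $\prec$ denote strict componentwise order. Standing assumption: $\sigma_{ij}=4\pi_1^*\pi_2^*\mu_i^*\mu_j^*\ne0$ for all $i\ne j$. *)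

theory Defs
  imports Complex_Main
begin

text \<open>Mixture of two Bernoullis on a finite feature index type 'n (D = CARD('n)).
  Parameters: p1 = pi_1^*, p2 = pi_2^* = 1 - p1, m1 = mu_1^*, m2 = mu_2^*.\<close>

definition xbar :: "real \<Rightarrow> ('n \<Rightarrow> real) \<Rightarrow> ('n \<Rightarrow> real) \<Rightarrow> 'n \<Rightarrow> real" where
  "xbar p1 m1 m2 i = p1 * m1 i + (1 - p1) * m2 i"

definition Svar :: "real \<Rightarrow> ('n \<Rightarrow> real) \<Rightarrow> ('n \<Rightarrow> real) \<Rightarrow> 'n \<Rightarrow> real" where
  "Svar p1 m1 m2 i = xbar p1 m1 m2 i * (1 - xbar p1 m1 m2 i)"

definition mustar :: "('n \<Rightarrow> real) \<Rightarrow> ('n \<Rightarrow> real) \<Rightarrow> 'n \<Rightarrow> real" where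
  "mustar m1 m2 i = (m1 i - m2 i) / 2"

definition coef :: "real \<Rightarrow> ('n \<Rightarrow> real) \<Rightarrow> ('n \<Rightarrow> real) \<Rightarrow> 'n \<Rightarrow> real" where
  "coef p1 m1 m2 i = 2 * inverse (Svar p1 m1 m2 i) * mustar m1 m2 i"

definition lam :: "real \<Rightarrow> ('n \<Rightarrow> real) \<Rightarrow> ('n \<Rightarrow> real) \<Rightarrow> ('n \<Rightarrow> real) \<Rightarrow> 'n \<Rightarrow> real" where
  "lam p1 m1 m2 mu1 i = coef p1 m1 m2 i * (mu1 i - xbar p1 m1 m2 i)"

definition mu1_of :: "real \<Rightarrow> ('n \<Rightarrow> real) \<Rightarrow> ('n \<Rightarrow> real) \<Rightarrow> ('n \<Rightarrow> real) \<Rightarrow> 'n \<Rightarrow> real" where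
  "mu1_of p1 m1 m2 l i = xbar p1 m1 m2 i + l i / coef p1 m1 m2 i"

definition Z1 :: "real \<Rightarrow> ('n::finite \<Rightarrow> real) \<Rightarrow> real" where
  "Z1 p1 l = p1 * (\<Prod>j\<in>UNIV. 1 + (1 - p1) * l j) + (1 - p1) * (\<Prod>j\<in>UNIV. 1 - p1 * l j)"

definition B1 :: "real \<Rightarrow> ('n::finite \<Rightarrow> real) \<Rightarrow> 'n \<Rightarrow> real" where
  "B1 p1 l i = (\<Prod>j\<in>UNIV - {i}. 1 + (1 - p1) * l j)"

definition B2 :: "real \<Rightarrow> ('n::finite \<Rightarrow> real) \<Rightarrow> 'n \<Rightarrow> real" where
  "B2 p1 l i = (\<Prod>j\<in>UNIV - {i}. 1 - p1 * l j)"

text \<open>The (leading-order, one-cluster regime) EM map in lambda coordinates.\<close>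
definition EM_M :: "real \<Rightarrow> ('n::finite \<Rightarrow> real) \<Rightarrow> ('n \<Rightarrow> real) \<Rightarrow> ('n \<Rightarrow> real) \<Rightarrow> 'n \<Rightarrow> real" where
  "EM_M p1 m1 m2 l i =
     (let mu = mu1_of p1 m1 m2 l i; Lam = mu * (1 - mu) in
      l i + (coef p1 m1 m2 i)^2 * p1 * (1 - p1) * Lam / Z1 p1 l * (B1 p1 l i - B2 p1 l i))"

end

theory Submission
  imports Defs
begin

text \<open>Because \<open>\<mu>\<^sub>2 = xbar\<close>, the factors \<open>1 + \<pi>\<^sub>2\<^sup>* \<lambda>\<^sub>j\<close> and \<open>1 - \<pi>\<^sub>1\<^sup>* \<lambda>\<^sub>j\<close> are the means,
  under the first and the second true component, of the likelihood ratio of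
  \<open>Bernoulli(\<mu>\<^sub>1\<^sub>j)\<close> to \<open>Bernoulli(xbar\<^sub>j)\<close>; hence they are positive at every interior
  feasible \<open>\<lambda>\<close>. So \<open>Z\<^sub>1 > 0\<close>, and \<open>M(\<lambda>)\<^sub>i - \<lambda>\<^sub>i\<close> is a positive multiple of \<open>B\<^sub>1\<^sub>i - B\<^sub>2\<^sub>i\<close>.
  On the positive orthant every factor of \<open>B\<^sub>1\<^sub>i\<close> exceeds the corresponding factor of \<open>B\<^sub>2\<^sub>i\<close>,
  on the negative orthant the reverse holds, and for \<open>D \<ge> 2\<close> these products are nonempty,
  so the inequalities are strict. Finally, \<open>\<sigma>\<^sub>i\<^sub>j \<noteq> 0\<close> with \<open>D \<ge> 2\<close> forces \<open>\<mu>\<^sub>i\<^sup>* \<noteq> 0\<close>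
  for every \<open>i\<close>, which keeps \<open>xbar\<close> inside \<open>(0, 1)\<close> and the map \<open>\<mu>\<^sub>1 \<mapsto> \<lambda>\<close> invertible.\<close>

lemma convex_combination_in_open_unit_interval:
  fixes a b p :: real
  assumes "0 \<le> a" "a \<le> 1" "0 \<le> b" "b \<le> 1" "a \<noteq> b" "0 < p" "p < 1"
  shows "0 < p * a + (1 - p) * b" "p * a + (1 - p) * b < 1"
proof -
  have "0 < a \<or> 0 < b" "a < 1 \<or> b < 1" using assms by auto
  moreover have "0 \<le> p * a" "p * a \<le> p" "0 \<le> (1 - p) * b" "(1 - p) * b \<le> 1 - p"
    using assms by (simp_all add: mult_left_le)
  moreover have "0 < a \<Longrightarrow> 0 < p * a" "0 < b \<Longrightarrow> 0 < (1 - p) * b"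
    "a < 1 \<Longrightarrow> p * a < p" "b < 1 \<Longrightarrow> (1 - p) * b < 1 - p"
    using assms by simp_all
  ultimately show "0 < p * a + (1 - p) * b" "p * a + (1 - p) * b < 1" by linarith+
qed

lemma likelihood_ratio_mean_pos:
  fixes m u x :: real
  assumes "0 \<le> m" "m \<le> 1" "0 < u" "u < 1" "0 < x" "x < 1"
  shows "0 < m * u / x + (1 - m) * (1 - u) / (1 - x)"
  using assms by (cases "m = 0") (simp_all add: add_pos_nonneg)

lemma mixture_factors_eq_likelihood_ratio_means:
  fixes a b p u x :: real
  assumes "x = p * a + (1 - p) * b" "0 < x" "x < 1"
  shows "1 + (1 - p) * ((a - b) * (u - x) / (x * (1 - x))) = a * u / x + (1 - a) * (1 - u) / (1 - x)"
    and "1 - p * ((a - b) * (u - x) / (x * (1 - x))) = b * u / x + (1 - b) * (1 - u) / (1 - x)"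
  using assms by (simp_all add: field_simps; algebra)+

lemma exists_other_element:
  fixes i :: "'a::finite"
  assumes "2 \<le> card (UNIV :: 'a set)"
  obtains j where "j \<noteq> i"
proof -
  have "card (UNIV :: 'a set) \<noteq> card {i}" using assms by simp
  then have "UNIV \<noteq> {i}" by metis
  then show thesis using that by blast
qed

lemma B2_less_B1:
  assumes "j \<noteq> i" "\<And>k. 0 < l k" "\<And>k. 0 \<le> 1 - p1 * l k"
  shows "B2 p1 l i < B1 p1 l i"
proof -
  have factor_less: "1 - p1 * l k < 1 + (1 - p1) * l k" for k
    using assms(2)[of k] by (simp add: algebra_simps)
  have factor_pos: "0 < 1 + (1 - p1) * l k" for k
    using assms(3)[of k] factor_less[of k] by linarith
  show ?thesis unfolding B1_def B2_def
    by (rule prod_mono_strict[of j]) (use assms factor_less factor_pos in \<open>auto intro: less_imp_le\<close>)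
qed

lemma B1_less_B2:
  assumes "j \<noteq> i" "\<And>k. l k < 0" "\<And>k. 0 \<le> 1 + (1 - p1) * l k"
  shows "B1 p1 l i < B2 p1 l i"
proof -
  have factor_less: "1 + (1 - p1) * l k < 1 - p1 * l k" for k
    using assms(2)[of k] by (simp add: algebra_simps)
  have factor_pos: "0 < 1 - p1 * l k" for k
    using assms(3)[of k] factor_less[of k] by linarith
  show ?thesis unfolding B1_def B2_def
    by (rule prod_mono_strict[of j]) (use assms factor_less factor_pos in \<open>auto intro: less_imp_le\<close>)
qed

locale separated_bernoulli_mixture =
  fixes p1 :: real and m1 m2 :: "'n::finite \<Rightarrow> real"
  assumes p1_pos: "0 < p1" and p1_less_1: "p1 < 1"
    and m1_unit: "0 \<le> m1 i" "m1 i \<le> 1"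
    and m2_unit: "0 \<le> m2 i" "m2 i \<le> 1"
    and m1_neq_m2: "m1 i \<noteq> m2 i"
begin

lemma xbar_pos: "0 < xbar p1 m1 m2 i" and xbar_less_1: "xbar p1 m1 m2 i < 1"
  unfolding xbar_def
  using convex_combination_in_open_unit_interval[OF m1_unit m2_unit m1_neq_m2 p1_pos p1_less_1]
  by auto

lemma Svar_pos: "0 < Svar p1 m1 m2 i"
  unfolding Svar_def using xbar_pos xbar_less_1 by simp

lemma coef_nonzero: "coef p1 m1 m2 i \<noteq> 0"
  unfolding coef_def mustar_def using Svar_pos[of i] m1_neq_m2[of i] by simp

lemma mu1_of_lam: "mu1_of p1 m1 m2 (lam p1 m1 m2 mu1) i = mu1 i"
  unfolding mu1_of_def lam_def using coef_nonzero by simp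

lemma lam_factors_pos:
  assumes "0 < mu1 i" "mu1 i < 1"
  shows "0 < 1 + (1 - p1) * lam p1 m1 m2 mu1 i" "0 < 1 - p1 * lam p1 m1 m2 mu1 i"
proof -
  let ?x = "xbar p1 m1 m2 i"
  have lam_eq: "lam p1 m1 m2 mu1 i = (m1 i - m2 i) * (mu1 i - ?x) / (?x * (1 - ?x))"
    unfolding lam_def coef_def Svar_def mustar_def
    using xbar_pos[of i] xbar_less_1[of i] by (simp add: field_simps)
  note factor_eqs = mixture_factors_eq_likelihood_ratio_means[OF xbar_def xbar_pos xbar_less_1]
  show "0 < 1 + (1 - p1) * lam p1 m1 m2 mu1 i" "0 < 1 - p1 * lam p1 m1 m2 mu1 i"
    unfolding lam_eq factor_eqs
    using likelihood_ratio_mean_pos assms m1_unit m2_unit xbar_pos xbar_less_1 by auto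
qed

lemma Z1_lam_pos:
  assumes "\<And>i. 0 < mu1 i \<and> mu1 i < 1"
  shows "0 < Z1 p1 (lam p1 m1 m2 mu1)"
proof -
  have "0 < (\<Prod>j\<in>UNIV. 1 + (1 - p1) * lam p1 m1 m2 mu1 j)"
    and "0 < (\<Prod>j\<in>UNIV. 1 - p1 * lam p1 m1 m2 mu1 j)"
    using lam_factors_pos assms by (auto intro: prod_pos)
  then show ?thesis unfolding Z1_def using p1_pos p1_less_1 by (simp add: add_pos_pos)
qed

lemma sgn_EM_M_minus_lam:
  assumes "\<And>i. 0 < mu1 i \<and> mu1 i < 1"
  defines "l \<equiv> lam p1 m1 m2 mu1"
  shows "sgn (EM_M p1 m1 m2 l i - l i) = sgn (B1 p1 l i - B2 p1 l i)"
proof -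
  define K where "K = (coef p1 m1 m2 i)\<^sup>2 * p1 * (1 - p1) * (mu1 i * (1 - mu1 i)) / Z1 p1 l"
  have "EM_M p1 m1 m2 l i - l i = K * (B1 p1 l i - B2 p1 l i)"
    unfolding EM_M_def Let_def K_def l_def mu1_of_lam by simp
  moreover have "0 < K"
    using coef_nonzero[of i] p1_pos p1_less_1 assms(1)[of i] Z1_lam_pos[OF assms(1)]
    unfolding K_def l_def by simp
  ultimately show ?thesis by (simp add: sgn_mult)
qed

theorem EM_M_gt_lam_on_positive_orthant:
  assumes "2 \<le> card (UNIV :: 'n set)" "\<And>i. 0 < mu1 i \<and> mu1 i < 1"
    and "\<And>i. 0 < lam p1 m1 m2 mu1 i"
  shows "lam p1 m1 m2 mu1 i < EM_M p1 m1 m2 (lam p1 m1 m2 mu1) i"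
proof -
  obtain j :: 'n where "j \<noteq> i" using exists_other_element[OF assms(1)] .
  have "B2 p1 (lam p1 m1 m2 mu1) i < B1 p1 (lam p1 m1 m2 mu1) i"
    by (rule B2_less_B1[OF \<open>j \<noteq> i\<close>])
      (use assms(2,3) lam_factors_pos(2) in \<open>auto intro: less_imp_le\<close>)
  then have "sgn (EM_M p1 m1 m2 (lam p1 m1 m2 mu1) i - lam p1 m1 m2 mu1 i) = 1"
    using sgn_EM_M_minus_lam[OF assms(2)] by simp
  then show ?thesis by (simp add: sgn_1_pos)
qed

theorem EM_M_less_lam_on_negative_orthant:
  assumes "2 \<le> card (UNIV :: 'n set)" "\<And>i. 0 < mu1 i \<and> mu1 i < 1"
    and "\<And>i. lam p1 m1 m2 mu1 i < 0"
  shows "EM_M p1 m1 m2 (lam p1 m1 m2 mu1) i < lam p1 m1 m2 mu1 i"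
proof -
  obtain j :: 'n where "j \<noteq> i" using exists_other_element[OF assms(1)] .
  have "B1 p1 (lam p1 m1 m2 mu1) i < B2 p1 (lam p1 m1 m2 mu1) i"
    by (rule B1_less_B2[OF \<open>j \<noteq> i\<close>])
      (use assms(2,3) lam_factors_pos(1) in \<open>auto intro: less_imp_le\<close>)
  then have "sgn (EM_M p1 m1 m2 (lam p1 m1 m2 mu1) i - lam p1 m1 m2 mu1 i) = -1"
    using sgn_EM_M_minus_lam[OF assms(2)] by simp
  then show ?thesis by (simp add: sgn_1_neg)
qed

end

lemma m1_neq_m2_if_sigma_nonzero:
  fixes m1 m2 :: "'n::finite \<Rightarrow> real"
  assumes "2 \<le> card (UNIV :: 'n set)"
    and "\<forall>i j. i \<noteq> j \<longrightarrow> 4 * p1 * (1 - p1) * mustar m1 m2 i * mustar m1 m2 j \<noteq> 0"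
  shows "m1 i \<noteq> m2 i"
proof -
  obtain j where "j \<noteq> i" using exists_other_element[OF assms(1)] .
  then have "mustar m1 m2 i \<noteq> 0" using assms(2) by (metis mult_zero_right)
  then show ?thesis unfolding mustar_def by simp
qed

theorem mainTheorem6:
  fixes p1 :: real and m1 m2 :: "'n::finite \<Rightarrow> real"
  assumes "card (UNIV :: 'n set) \<ge> 2"
    and "0 < p1" and "p1 < 1"
    and "\<forall>i. 0 \<le> m1 i \<and> m1 i \<le> 1" and "\<forall>i. 0 \<le> m2 i \<and> m2 i \<le> 1"
    and "\<forall>i j. i \<noteq> j \<longrightarrow> 4 * p1 * (1 - p1) * mustar m1 m2 i * mustar m1 m2 j \<noteq> 0"
  shows "(\<forall>mu1. (\<forall>i. 0 < mu1 i \<and> mu1 i < 1) \<longrightarrow>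
            (\<forall>i. lam p1 m1 m2 mu1 i > 0) \<longrightarrow>
            (\<forall>i. EM_M p1 m1 m2 (lam p1 m1 m2 mu1) i > lam p1 m1 m2 mu1 i))
       \<and> (\<forall>mu1. (\<forall>i. 0 < mu1 i \<and> mu1 i < 1) \<longrightarrow>
            (\<forall>i. lam p1 m1 m2 mu1 i < 0) \<longrightarrow>
            (\<forall>i. EM_M p1 m1 m2 (lam p1 m1 m2 mu1) i < lam p1 m1 m2 mu1 i))"
proof -
  interpret separated_bernoulli_mixture p1 m1 m2
    using assms m1_neq_m2_if_sigma_nonzero[OF assms(1,6)] by unfold_locales auto
  show ?thesis
    using EM_M_gt_lam_on_positive_orthant EM_M_less_lam_on_negative_orthant assms(1) by blast
qed

end
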